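(* Let $l\le n$ be positive integers and let $\mathbb F\subseteq\mathbb D_1^n$ satisfy $\mathrm{lh}(\mathbb F)\le l$. If $|\mathbb F|<2^l-1$, then there exists an index set $\mathbb F_0\subseteq\mathbb D_1^n\setminus\mathbb F$ of cardinality $2^l-1-|\mathbb F|$ such that $\mathrm{lh}(\mathbb F\cup\mathbb F_0)\le l$.
   Context: Dyadic intervals: $\Delta_k^{(j)}:=[\frac{j-1}{2^k},\frac{j}{2^k})$ for $k\ge0$. Dyadic tree $\mathbb D:=\{(k,j):k\ge1;\ j=1,\dots,2^{k-1}\}$; $\mathbb D_1^n:=\{(k,j):k=1,\dots,n;\ j=1,\dots,2^{k-1}\}$. Branches: $\mathbb B(t):=\{(k,j)\in\mathbb D:t\in\Delta_{k-1}^{(j)}\}$ for $t\in[0,1)$; local height of a finite $\mathbb F\subseteq\mathbb D$: $\mathrm{lh}(\mathbb F):=\max_{t\in[0,1)}|\mathbb F\cap\mathbb B(t)|$. *)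

theory Defs
  imports Complex_Main
begin

definition dyadic_interval :: "nat \<Rightarrow> nat \<Rightarrow> real set" where
  "dyadic_interval k j = {(real j - 1) / 2 ^ k ..< real j / 2 ^ k}"

definition dyadic_tree :: "(nat \<times> nat) set" where
  "dyadic_tree = {(k, j). k \<ge> 1 \<and> 1 \<le> j \<and> j \<le> 2 ^ (k - 1)}"

definition dyadic_tree_upto :: "nat \<Rightarrow> (nat \<times> nat) set" where
  "dyadic_tree_upto n = {(k, j). 1 \<le> k \<and> k \<le> n \<and> 1 \<le> j \<and> j \<le> 2 ^ (k - 1)}"

definition branch :: "real \<Rightarrow> (nat \<times> nat) set" where
  "branch t = {(k, j) \<in> dyadic_tree. t \<in> dyadic_interval (k - 1) j}"

definition local_height :: "(nat \<times> nat) set \<Rightarrow> nat" where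
  "local_height F = Max ((\<lambda>t. card (F \<inter> branch t)) ` {0..<1})"

end

theory Submission
  imports Defs
begin

text \<open>Enlarge \<open>F\<close> to a maximal \<open>G \<subseteq> D_1^n\<close> of local height at most \<open>l\<close>; by maximality every
  node outside \<open>G\<close> lies on a branch that already carries \<open>l\<close> nodes of \<open>G\<close>, and \<open>F0\<close> can be
  taken inside \<open>G - F\<close> once \<open>|G| \<ge> 2^l - 1\<close>. That bound holds for any such saturated set, by
  induction over subtrees: if every node of a subtree outside \<open>G\<close> lies on a root-to-leaf path
  meeting \<open>G\<close> in at least \<open>m\<close> nodes of the subtree, then the subtree contains \<open>2^m - 1\<close> nodes
  of \<open>G\<close>. If the root is in \<open>G\<close>, both child subtrees are saturated for \<open>m - 1\<close>; if not, they
  are saturated for \<open>m\<close>, and a path through the root shows that \<open>m\<close> is at most the number of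
  levels below the root.\<close>

lemma finite_dyadic_tree_upto: "finite (dyadic_tree_upto n)"
proof (rule finite_subset)
  show "dyadic_tree_upto n \<subseteq> {..n} \<times> {..(2::nat) ^ n}"
  proof
    fix w assume "w \<in> dyadic_tree_upto n"
    then obtain k j where w: "w = (k, j)" "k \<le> n" "j \<le> 2 ^ (k - 1)"
      unfolding dyadic_tree_upto_def by auto
    have "(2::nat) ^ (k - 1) \<le> 2 ^ n" using w(2) by (intro power_increasing) auto
    then show "w \<in> {..n} \<times> {..(2::nat) ^ n}" using w by (auto intro: order_trans)
  qed
qed simp

lemma local_height_le_iff:
  assumes "finite F"
  shows "local_height F \<le> l \<longleftrightarrow> (\<forall>t\<in>{0..<1}. card (F \<inter> branch t) \<le> l)"
proof -
  have "finite ((\<lambda>t. card (F \<inter> branch t)) ` {0..<1::real})"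
    by (rule finite_subset[of _ "{..card F}"]) (auto intro!: card_mono assms)
  then show ?thesis unfolding local_height_def by (simp add: Max_le_iff)
qed

lemma card_Int_branch_le_local_height:
  "finite F \<Longrightarrow> t \<in> {0..<1} \<Longrightarrow> card (F \<inter> branch t) \<le> local_height F"
  using local_height_le_iff by blast

lemma local_height_mono:
  assumes "A \<subseteq> B" "finite B"
  shows "local_height A \<le> local_height B"
proof -
  have "card (A \<inter> branch t) \<le> local_height B" if "t \<in> {0..<1}" for t
  proof -
    have "card (A \<inter> branch t) \<le> card (B \<inter> branch t)"
      using assms by (intro card_mono) auto
    also have "\<dots> \<le> local_height B" using card_Int_branch_le_local_height assms(2) that .
    finally show ?thesis .
  qed
  then show ?thesis using local_height_le_iff[of A] assms finite_subset by blast
qed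

lemma local_height_insert_le:
  assumes "finite G" "local_height G \<le> l"
    and "\<And>t. t \<in> {0..<1} \<Longrightarrow> w \<in> branch t \<Longrightarrow> card (G \<inter> branch t) < l"
  shows "local_height (insert w G) \<le> l"
proof -
  have "card (insert w G \<inter> branch t) \<le> l" if t: "t \<in> {0..<1}" for t
  proof (cases "w \<in> branch t")
    case True
    then show ?thesis using assms(1) assms(3)[OF t] by (simp add: card_insert_if)
  next
    case False
    then show ?thesis using assms(1,2) local_height_le_iff t by auto
  qed
  then show ?thesis using assms(1) local_height_le_iff by blast
qed

text \<open>The complete binary tree of height \<open>H\<close> in heap indexing: node \<open>(a, b)\<close> sits at depth
  \<open>a \<le> H\<close> and position \<open>b < 2 ^ a\<close>, with children \<open>(a + 1, 2 * b)\<close> and \<open>(a + 1, 2 * b + 1)\<close>.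
  The dyadic node \<open>(k, j)\<close> corresponds to \<open>(k - 1, j - 1)\<close>, and a branch to the path
  from the root to a leaf \<open>x < 2 ^ H\<close>.\<close>

definition leaf_path :: "nat \<Rightarrow> nat \<Rightarrow> (nat \<times> nat) set" where
  "leaf_path H x = {(a, b). a \<le> H \<and> b = x div 2 ^ (H - a)}"

definition subtree :: "nat \<Rightarrow> nat \<Rightarrow> nat \<Rightarrow> (nat \<times> nat) set" where
  "subtree H d q = {(a, b). d \<le> a \<and> a \<le> H \<and> b div 2 ^ (a - d) = q}"

lemma div_pow2_div_pow2:
  assumes "d \<le> a" "a \<le> H"
  shows "(x::nat) div 2 ^ (H - a) div 2 ^ (a - d) = x div 2 ^ (H - d)"
proof -
  have "(2::nat) ^ (H - a) * 2 ^ (a - d) = 2 ^ (H - d)"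
    using assms by (simp flip: power_add)
  then show ?thesis by (metis div_mult2_eq)
qed

lemma subtree_split:
  assumes "d < H"
  shows "subtree H d q = insert (d, q) (subtree H (Suc d) (2 * q) \<union> subtree H (Suc d) (2 * q + 1))"
proof -
  have div2: "y div 2 = q \<longleftrightarrow> y = 2 * q \<or> y = 2 * q + 1" for y :: nat
    by presburger
  have "b div 2 ^ (a - d) = b div 2 ^ (a - Suc d) div 2" if "Suc d \<le> a" for a b :: nat
    using div_pow2_div_pow2[of "Suc d" a a b] div_pow2_div_pow2[of d "Suc d" a b] that by simp
  then have "(a, b) \<in> subtree H d q \<longleftrightarrow>
      (a, b) = (d, q) \<or> (a, b) \<in> subtree H (Suc d) (2 * q) \<or> (a, b) \<in> subtree H (Suc d) (2 * q + 1)"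
    for a b
    using assms div2[of "b div 2 ^ (a - Suc d)"] unfolding subtree_def by (cases "a = d") auto
  then show ?thesis by auto
qed

lemma finite_leaf_path: "finite (leaf_path H x)"
proof -
  have "leaf_path H x = (\<lambda>a. (a, x div 2 ^ (H - a))) ` {..H}"
    unfolding leaf_path_def by auto
  then show ?thesis by simp
qed

lemma subtree_Int_leaf_path:
  "subtree H d q \<inter> leaf_path H x =
     {(a, b). d \<le> a \<and> a \<le> H \<and> b = x div 2 ^ (H - a) \<and> x div 2 ^ (H - d) = q}"
  unfolding subtree_def leaf_path_def by (auto simp: div_pow2_div_pow2)

lemma subtree_Int_leaf_path_subset_child:
  assumes "subtree H (Suc d) c \<inter> leaf_path H x \<noteq> {}"
  shows "subtree H d q \<inter> leaf_path H x \<subseteq> insert (d, q) (subtree H (Suc d) c \<inter> leaf_path H x)"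
proof -
  have "Suc d \<le> H" "x div 2 ^ (H - Suc d) = c"
    using assms unfolding subtree_Int_leaf_path by auto
  then show ?thesis
    unfolding subtree_Int_leaf_path by (auto simp: Suc_le_eq) (metis le_neq_implies_less)
qed

lemma card_subtree_Int_leaf_path_Diff_root:
  "card (subtree H d q \<inter> leaf_path H x - {(d, q)}) \<le> H - d"
proof -
  have "subtree H d q \<inter> leaf_path H x - {(d, q)} \<subseteq> (\<lambda>a. (a, x div 2 ^ (H - a))) ` {Suc d..H}"
    unfolding subtree_Int_leaf_path by (auto simp: Suc_le_eq image_iff)
  then have "card (subtree H d q \<inter> leaf_path H x - {(d, q)}) \<le> card {Suc d..H}"
    by (meson card_image_le card_mono finite_atLeastAtMost finite_imageI le_trans)
  then show ?thesis by simp
qed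

definition subtree_saturated :: "nat \<Rightarrow> nat \<Rightarrow> (nat \<times> nat) set \<Rightarrow> nat \<Rightarrow> nat \<Rightarrow> bool" where
  "subtree_saturated H m G d q \<longleftrightarrow>
     (\<forall>w \<in> subtree H d q - G. \<exists>x. w \<in> leaf_path H x \<and> m \<le> card (G \<inter> subtree H d q \<inter> leaf_path H x))"

lemma subtree_saturated_root_bound:
  assumes "subtree_saturated H m G d q" "d \<le> H" "(d, q) \<notin> G"
  shows "m \<le> H - d"
proof -
  have "(d, q) \<in> subtree H d q - G" using assms(2,3) by (simp add: subtree_def)
  then obtain x where "m \<le> card (G \<inter> subtree H d q \<inter> leaf_path H x)"
    using assms(1) unfolding subtree_saturated_def by blast
  also have "\<dots> \<le> card (subtree H d q \<inter> leaf_path H x - {(d, q)})"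
    using assms(3) finite_leaf_path by (intro card_mono) auto
  also have "\<dots> \<le> H - d" by (rule card_subtree_Int_leaf_path_Diff_root)
  finally show ?thesis .
qed

lemma subtree_saturated_child:
  assumes "subtree_saturated H m G d q" "d < H" "c \<in> {2 * q, 2 * q + 1}"
  shows "subtree_saturated H (m - of_bool ((d, q) \<in> G)) G (Suc d) c"
  unfolding subtree_saturated_def
proof
  fix w assume w: "w \<in> subtree H (Suc d) c - G"
  then have "w \<in> subtree H d q - G" using subtree_split[OF assms(2)] assms(3) by auto
  then obtain x where x: "w \<in> leaf_path H x" "m \<le> card (G \<inter> subtree H d q \<inter> leaf_path H x)"
    using assms(1) unfolding subtree_saturated_def by blast
  have "G \<inter> subtree H d q \<inter> leaf_path H x \<subseteq> (G \<inter> {(d, q)}) \<union> (G \<inter> subtree H (Suc d) c \<inter> leaf_path H x)"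
    using subtree_Int_leaf_path_subset_child[of H d c x q] w x(1) by blast
  then have "card (G \<inter> subtree H d q \<inter> leaf_path H x)
      \<le> card ((G \<inter> {(d, q)}) \<union> (G \<inter> subtree H (Suc d) c \<inter> leaf_path H x))"
    by (intro card_mono) (simp_all add: finite_leaf_path)
  also have "\<dots> \<le> card (G \<inter> {(d, q)}) + card (G \<inter> subtree H (Suc d) c \<inter> leaf_path H x)"
    by (rule card_Un_le)
  finally have "m - of_bool ((d, q) \<in> G) \<le> card (G \<inter> subtree H (Suc d) c \<inter> leaf_path H x)"
    using x(2) by (auto split: if_splits)
  then show "\<exists>x. w \<in> leaf_path H x \<and>
      m - of_bool ((d, q) \<in> G) \<le> card (G \<inter> subtree H (Suc d) c \<inter> leaf_path H x)"
    using x(1) by blast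
qed

lemma card_Int_subtree_split:
  assumes "finite G" "d < H"
  shows "card (G \<inter> subtree H d q) = of_bool ((d, q) \<in> G)
           + card (G \<inter> subtree H (Suc d) (2 * q)) + card (G \<inter> subtree H (Suc d) (2 * q + 1))"
proof -
  have "G \<inter> subtree H d q
      = (G \<inter> {(d, q)}) \<union> ((G \<inter> subtree H (Suc d) (2 * q)) \<union> (G \<inter> subtree H (Suc d) (2 * q + 1)))"
    using subtree_split[OF assms(2)] by auto
  moreover have "(d, q) \<notin> subtree H (Suc d) c" for c by (simp add: subtree_def)
  moreover have "subtree H (Suc d) (2 * q) \<inter> subtree H (Suc d) (2 * q + 1) = {}"
    by (auto simp: subtree_def)
  ultimately show ?thesis
    using assms(1) by (simp add: card_Un_disjoint disjoint_iff Int_ac)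
qed

theorem card_Int_subtree_ge_if_saturated:
  assumes "finite G" "subtree_saturated H m G d q" "d \<le> H" "m \<le> Suc (H - d)"
  shows "2 ^ m - 1 \<le> card (G \<inter> subtree H d q)"
  using assms(2-)
proof (induction "H - d" arbitrary: d q m)
  case 0
  show ?case
  proof (cases "(d, q) \<in> G")
    case True
    then have "(d, q) \<in> G \<inter> subtree H d q" using 0 by (simp add: subtree_def)
    then have "1 \<le> card (G \<inter> subtree H d q)"
      using assms(1) by (metis One_nat_def Suc_leI card_gt_0_iff empty_iff finite_Int)
    moreover have "m \<le> 1" using 0 by simp
    ultimately show ?thesis by (cases m) auto
  next
    case False
    then have "m = 0" using subtree_saturated_root_bound[OF "0.prems"(1,2)] "0.hyps" by simp
    then show ?thesis by simp
  qed
next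
  case (Suc e)
  then have dH: "d < H" by arith
  define r :: nat where "r = of_bool ((d, q) \<in> G)"
  have mr: "m - r \<le> Suc (H - Suc d)"
  proof (cases "(d, q) \<in> G")
    case False
    then show ?thesis using subtree_saturated_root_bound[OF Suc.prems(1,2)] r_def by simp
  qed (use Suc.prems r_def in auto)
  have IH: "2 ^ (m - r) - 1 \<le> card (G \<inter> subtree H (Suc d) c)"
    if "c \<in> {2 * q, 2 * q + 1}" for c
  proof (rule Suc.hyps(1))
    show "e = H - Suc d" using Suc.hyps(2) by arith
    show "subtree_saturated H (m - r) G (Suc d) c"
      unfolding r_def using subtree_saturated_child[OF Suc.prems(1) dH that] .
  qed (use dH mr in auto)
  have "2 ^ m - 1 \<le> r + 2 * (2 ^ (m - r) - 1)"
    unfolding r_def by (cases m; cases "(d, q) \<in> G") auto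
  moreover have "card (G \<inter> subtree H d q)
      = r + card (G \<inter> subtree H (Suc d) (2 * q)) + card (G \<inter> subtree H (Suc d) (2 * q + 1))"
    unfolding r_def by (rule card_Int_subtree_split[OF assms(1) dH])
  moreover have "2 ^ (m - r) - 1 \<le> card (G \<inter> subtree H (Suc d) (2 * q))"
    and "2 ^ (m - r) - 1 \<le> card (G \<inter> subtree H (Suc d) (2 * q + 1))"
    by (rule IH; simp)+
  ultimately show ?case by linarith
qed

lemma Suc_Suc_in_branch_iff:
  assumes "t \<in> {0..<1}"
  shows "(Suc a, Suc b) \<in> branch t \<longleftrightarrow> b = nat \<lfloor>t * 2 ^ a\<rfloor>"
proof -
  have "(Suc a, Suc b) \<in> branch t \<longleftrightarrow> Suc b \<le> 2 ^ a \<and> real b \<le> t * 2 ^ a \<and> t * 2 ^ a < real b + 1"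
    unfolding branch_def dyadic_tree_def dyadic_interval_def
    by (simp add: divide_le_eq less_divide_eq add.commute)
  also have "\<dots> \<longleftrightarrow> real b \<le> t * 2 ^ a \<and> t * 2 ^ a < real b + 1"
  proof -
    have "t * 2 ^ a < 2 ^ a" using assms by simp
    then have "real b \<le> t * 2 ^ a \<Longrightarrow> b < 2 ^ a"
      by (metis of_nat_less_numeral_power_cancel_iff order_le_less_trans)
    then show ?thesis by auto
  qed
  also have "\<dots> \<longleftrightarrow> \<lfloor>t * 2 ^ a\<rfloor> = int b"
    by (simp add: floor_eq_iff)
  also have "\<dots> \<longleftrightarrow> b = nat \<lfloor>t * 2 ^ a\<rfloor>"
    using assms by auto
  finally show ?thesis .
qed

lemma nat_floor_mult_pow2_div:
  fixes t :: real
  assumes "0 \<le> t" "a \<le> H"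
  shows "nat \<lfloor>t * 2 ^ a\<rfloor> = nat \<lfloor>t * 2 ^ H\<rfloor> div 2 ^ (H - a)"
proof -
  have "(2::real) ^ H = 2 ^ a * 2 ^ (H - a)"
    using assms(2) by (simp flip: power_add)
  then have "t * 2 ^ a = t * 2 ^ H / real_of_int (2 ^ (H - a))"
    by simp
  then have "\<lfloor>t * 2 ^ a\<rfloor> = \<lfloor>t * 2 ^ H\<rfloor> div 2 ^ (H - a)"
    by (simp add: floor_divide_real_eq_div del: of_int_power)
  then show ?thesis using assms(1) by (simp add: nat_div_distrib nat_power_eq)
qed

lemma Suc_Suc_in_branch_iff_leaf_path:
  assumes "t \<in> {0..<1}" "a \<le> H"
  shows "(Suc a, Suc b) \<in> branch t \<longleftrightarrow> (a, b) \<in> leaf_path H (nat \<lfloor>t * 2 ^ H\<rfloor>)"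
  using assms by (simp add: Suc_Suc_in_branch_iff nat_floor_mult_pow2_div leaf_path_def)

lemma dyadic_tree_upto_Suc_eq_image:
  "dyadic_tree_upto (Suc H) = (\<lambda>(a, b). (Suc a, Suc b)) ` subtree H 0 0"
proof (intro equalityI subsetI)
  fix w assume "w \<in> dyadic_tree_upto (Suc H)"
  then obtain k j where w: "w = (k, j)" "1 \<le> k" "k \<le> Suc H" "1 \<le> j" "j \<le> 2 ^ (k - 1)"
    unfolding dyadic_tree_upto_def by auto
  then have "(k - 1, j - 1) \<in> subtree H 0 0" by (auto simp: subtree_def div_eq_0_iff)
  moreover have "w = (\<lambda>(a, b). (Suc a, Suc b)) (k - 1, j - 1)" using w by simp
  ultimately show "w \<in> (\<lambda>(a, b). (Suc a, Suc b)) ` subtree H 0 0" by blast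
next
  fix w assume "w \<in> (\<lambda>(a, b). (Suc a, Suc b)) ` subtree H 0 0"
  then obtain a b where "w = (Suc a, Suc b)" "a \<le> H" "b < 2 ^ a"
    by (auto simp: subtree_def div_eq_0_iff)
  then show "w \<in> dyadic_tree_upto (Suc H)" by (simp add: dyadic_tree_upto_def)
qed

lemma image_Suc_Suc_Int_branch:
  assumes "G \<subseteq> subtree H 0 0" "t \<in> {0..<1}"
  shows "(\<lambda>(a, b). (Suc a, Suc b)) ` G \<inter> branch t
         = (\<lambda>(a, b). (Suc a, Suc b)) ` (G \<inter> leaf_path H (nat \<lfloor>t * 2 ^ H\<rfloor>))"
proof -
  have "(Suc a, Suc b) \<in> branch t \<longleftrightarrow> (a, b) \<in> leaf_path H (nat \<lfloor>t * 2 ^ H\<rfloor>)"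
    if "(a, b) \<in> G" for a b
    using that assms(1) Suc_Suc_in_branch_iff_leaf_path[OF assms(2)] by (auto simp: subtree_def)
  then show ?thesis by auto
qed

definition branch_saturated :: "nat \<Rightarrow> nat \<Rightarrow> (nat \<times> nat) set \<Rightarrow> bool" where
  "branch_saturated n l G \<longleftrightarrow>
     (\<forall>w \<in> dyadic_tree_upto n - G. \<exists>t\<in>{0..<1}. w \<in> branch t \<and> l \<le> card (G \<inter> branch t))"

theorem card_ge_if_branch_saturated:
  assumes "l \<le> n" "G \<subseteq> dyadic_tree_upto n" "branch_saturated n l G"
  shows "2 ^ l - 1 \<le> card G"
proof (cases n)
  case 0
  then show ?thesis using assms(1) by simp
next
  case (Suc H)
  define \<psi> :: "nat \<times> nat \<Rightarrow> nat \<times> nat" where "\<psi> = (\<lambda>(a, b). (Suc a, Suc b))"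
  define x :: "real \<Rightarrow> nat" where "x t = nat \<lfloor>t * 2 ^ H\<rfloor>" for t
  have inj: "inj \<psi>" unfolding \<psi>_def inj_def by auto
  then have card_\<psi>: "card (\<psi> ` X) = card X" for X
    by (simp add: card_image inj_on_subset)
  have tree: "dyadic_tree_upto n = \<psi> ` subtree H 0 0"
    unfolding Suc \<psi>_def by (rule dyadic_tree_upto_Suc_eq_image)
  obtain G0 where G0: "G0 \<subseteq> subtree H 0 0" "G = \<psi> ` G0"
    using assms(2) unfolding tree subset_image_iff by blast
  have "subtree_saturated H l G0 0 0"
    unfolding subtree_saturated_def
  proof
    fix w assume w: "w \<in> subtree H 0 0 - G0"
    then have "\<psi> w \<in> dyadic_tree_upto n - G"
      unfolding tree G0(2) using inj by (simp add: inj_image_mem_iff)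
    then obtain t where t: "t \<in> {0..<1}" "\<psi> w \<in> branch t" "l \<le> card (G \<inter> branch t)"
      using assms(3) unfolding branch_saturated_def by blast
    have "w \<in> leaf_path H (x t)"
      using t(2) w Suc_Suc_in_branch_iff_leaf_path[OF t(1)] unfolding \<psi>_def x_def subtree_def by auto
    moreover have "card (G \<inter> branch t) = card (G0 \<inter> subtree H 0 0 \<inter> leaf_path H (x t))"
      using image_Suc_Suc_Int_branch[OF G0(1) t(1)] G0 card_\<psi>
      unfolding \<psi>_def x_def by (simp add: Int_absorb2)
    ultimately show "\<exists>x. w \<in> leaf_path H x \<and> l \<le> card (G0 \<inter> subtree H 0 0 \<inter> leaf_path H x)"
      using t(3) by auto
  qed
  moreover have "finite G0"
    using G0(2) assms(2) finite_dyadic_tree_upto inj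
    by (metis finite_imageD finite_subset inj_on_subset subset_UNIV)
  ultimately have "2 ^ l - 1 \<le> card (G0 \<inter> subtree H 0 0)"
    using card_Int_subtree_ge_if_saturated assms(1) Suc by simp
  then show ?thesis using G0 card_\<psi> by (simp add: Int_absorb2)
qed

lemma exists_branch_saturated_extension:
  assumes "F \<subseteq> dyadic_tree_upto n" "local_height F \<le> l"
  obtains G where "F \<subseteq> G" "G \<subseteq> dyadic_tree_upto n" "local_height G \<le> l" "branch_saturated n l G"
proof -
  define A where "A = {G. F \<subseteq> G \<and> G \<subseteq> dyadic_tree_upto n \<and> local_height G \<le> l}"
  have "finite A"
    by (rule finite_subset[of _ "Pow (dyadic_tree_upto n)"]) (auto simp: A_def finite_dyadic_tree_upto)
  moreover have "F \<in> A" using assms by (simp add: A_def)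
  ultimately obtain G where G: "G \<in> A" "F \<subseteq> G" and max: "\<forall>G' \<in> A. G \<subseteq> G' \<longrightarrow> G = G'"
    using finite_has_maximal2[of A F] by blast
  have fin: "finite G"
    using G(1) finite_dyadic_tree_upto finite_subset unfolding A_def by blast
  have "branch_saturated n l G"
    unfolding branch_saturated_def
  proof (rule ballI, rule ccontr)
    fix w assume w: "w \<in> dyadic_tree_upto n - G"
      and no_full: "\<not> (\<exists>t\<in>{0..<1}. w \<in> branch t \<and> l \<le> card (G \<inter> branch t))"
    have "local_height G \<le> l" using G(1) by (simp add: A_def)
    then have "local_height (insert w G) \<le> l"
      using local_height_insert_le[OF fin] no_full by (meson not_le)
    then have "insert w G \<in> A" using G w unfolding A_def by auto
    then show False using max w by blast
  qed
  with G show ?thesis by (intro that) (simp_all add: A_def)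
qed

theorem corollary4p2:
  fixes l n :: nat and F :: "(nat \<times> nat) set"
  assumes "1 \<le> l" and "l \<le> n"
    and "F \<subseteq> dyadic_tree_upto n"
    and "local_height F \<le> l"
    and "card F < 2 ^ l - 1"
  shows "\<exists>F0. F0 \<subseteq> dyadic_tree_upto n - F \<and> card F0 = 2 ^ l - 1 - card F
           \<and> local_height (F \<union> F0) \<le> l"
proof -
  obtain G where FG: "F \<subseteq> G" and GD: "G \<subseteq> dyadic_tree_upto n"
    and lhG: "local_height G \<le> l" and sat: "branch_saturated n l G"
    using exists_branch_saturated_extension assms(3,4) by blast
  have finG: "finite G" using GD finite_dyadic_tree_upto finite_subset by blast
  have "2 ^ l - 1 \<le> card G" using card_ge_if_branch_saturated assms(2) GD sat by blast
  then have "2 ^ l - 1 - card F \<le> card (G - F)"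
    using FG finG by (simp add: card_Diff_subset finite_subset)
  then obtain F0 where F0: "F0 \<subseteq> G - F" "card F0 = 2 ^ l - 1 - card F"
    by (meson obtain_subset_with_card_n)
  have "F \<union> F0 \<subseteq> G" using F0(1) FG by blast
  then have "local_height (F \<union> F0) \<le> l"
    by (rule order_trans[OF local_height_mono[OF _ finG] lhG])
  then show ?thesis using F0 GD by blast
qed

end
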